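(* Let $G=(U,V,E)$ be a path restricted ordered bipartite graph and let $v$ be any vertex of $G$. Let $T_r(v)$ be the subgraph formed by the union of all forward paths starting at $v$ whose vertices decrease in order (i.e., read from $v$, the $U$-vertices strictly decrease and the $V$-vertices strictly decrease). Then the subgraph of $G$ induced by the vertex set of $T_r(v)$ has exactly $N-1$ edges, where $N$ is the number of vertices of $T_r(v)$; i.e., this induced subgraph coincides with $T_r(v)$ and is a tree.
   Context: An ordered bipartite graph $G=(U,V,E)$ consists of disjoint finite sets $U,V$, each totally ordered, and $E\subseteq U\times V$. A forward path is a sequence $w_0,\dots,w_m$ of distinct vertices alternating between $U$ and $V$, consecutive ones adjacent, such that the $U$-vertices appear in strictly increasing order and the $V$-vertices appear in strictly increasing order along the sequence (or, read in reverse, both strictly decreasing). A back edge to a forward path $w_0,\dots,w_m$ (written in increasing direction) is an edge $\{w_0,x\}\in E$ with $x$ in the part not containing $w_0$ and $w_1<x\le M$, where $M$ is the largest vertex of the path in that part. $G$ is a path restricted ordered bipartite graph if no forward path has a back edge. *)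

theory Defs
  imports Main
begin

text \<open>An ordered bipartite graph (U, V, E): U and V are finite subsets of linearly
ordered types 'a and 'b; vertices are represented in the disjoint sum 'a + 'b
(Inl for U-vertices, Inr for V-vertices); E is a subset of U x V.\<close>

definition ordered_bipartite :: "'a::linorder set \<Rightarrow> 'b::linorder set \<Rightarrow> ('a \<times> 'b) set \<Rightarrow> bool" where
  "ordered_bipartite U V E \<longleftrightarrow> finite U \<and> finite V \<and> E \<subseteq> U \<times> V"

definition verts :: "'a set \<Rightarrow> 'b set \<Rightarrow> ('a + 'b) set" where
  "verts U V = Inl ` U \<union> Inr ` V"

fun adj :: "('a \<times> 'b) set \<Rightarrow> 'a + 'b \<Rightarrow> 'a + 'b \<Rightarrow> bool" where
  "adj E (Inl u) (Inr w) = ((u, w) \<in> E)"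
| "adj E (Inr w) (Inl u) = ((u, w) \<in> E)"
| "adj E _ _ = False"

fun vless :: "'a::linorder + 'b::linorder \<Rightarrow> 'a + 'b \<Rightarrow> bool" where
  "vless (Inl a) (Inl b) = (a < b)"
| "vless (Inr a) (Inr b) = (a < b)"
| "vless _ _ = False"

fun vle :: "'a::linorder + 'b::linorder \<Rightarrow> 'a + 'b \<Rightarrow> bool" where
  "vle (Inl a) (Inl b) = (a \<le> b)"
| "vle (Inr a) (Inr b) = (a \<le> b)"
| "vle _ _ = False"

definition lefts :: "('a + 'b) list \<Rightarrow> 'a list" where
  "lefts ws = concat (map (case_sum (\<lambda>u. [u]) (\<lambda>_. [])) ws)"

definition rights :: "('a + 'b) list \<Rightarrow> 'b list" where
  "rights ws = concat (map (case_sum (\<lambda>_. []) (\<lambda>w. [w])) ws)"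

definition inc_path :: "'a::linorder set \<Rightarrow> 'b::linorder set \<Rightarrow> ('a \<times> 'b) set \<Rightarrow> ('a + 'b) list \<Rightarrow> bool" where
  "inc_path U V E ws \<longleftrightarrow> ws \<noteq> [] \<and> set ws \<subseteq> verts U V \<and> distinct ws \<and>
     (\<forall>i. Suc i < length ws \<longrightarrow> adj E (ws ! i) (ws ! Suc i)) \<and>
     sorted_wrt (<) (lefts ws) \<and> sorted_wrt (<) (rights ws)"

definition forward_path :: "'a::linorder set \<Rightarrow> 'b::linorder set \<Rightarrow> ('a \<times> 'b) set \<Rightarrow> ('a + 'b) list \<Rightarrow> bool" where
  "forward_path U V E ws \<longleftrightarrow> inc_path U V E ws \<or> inc_path U V E (rev ws)"

text \<open>A back edge to an increasing forward path w0,...,wm: an edge {w0, x} with x in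
the part not containing w0 and w1 < x \<le> M, M the largest path vertex in that part.\<close>
definition has_back_edge :: "'a::linorder set \<Rightarrow> 'b::linorder set \<Rightarrow> ('a \<times> 'b) set \<Rightarrow> ('a + 'b) list \<Rightarrow> bool" where
  "has_back_edge U V E ws \<longleftrightarrow> length ws \<ge> 2 \<and>
     (\<exists>x \<in> verts U V. adj E (ws ! 0) x \<and> vless (ws ! 1) x \<and> (\<exists>z \<in> set ws. vle x z))"

definition path_restricted :: "'a::linorder set \<Rightarrow> 'b::linorder set \<Rightarrow> ('a \<times> 'b) set \<Rightarrow> bool" where
  "path_restricted U V E \<longleftrightarrow> ordered_bipartite U V E \<and>
     (\<forall>ws. inc_path U V E ws \<longrightarrow> \<not> has_back_edge U V E ws)"

definition dec_paths_from :: "'a::linorder set \<Rightarrow> 'b::linorder set \<Rightarrow> ('a \<times> 'b) set \<Rightarrow> 'a + 'b \<Rightarrow> ('a + 'b) list set" where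
  "dec_paths_from U V E v = {ws. inc_path U V E (rev ws) \<and> hd ws = v}"

definition Tr_verts :: "'a::linorder set \<Rightarrow> 'b::linorder set \<Rightarrow> ('a \<times> 'b) set \<Rightarrow> 'a + 'b \<Rightarrow> ('a + 'b) set" where
  "Tr_verts U V E v = (\<Union>ws \<in> dec_paths_from U V E v. set ws)"

definition Tr_edges :: "'a::linorder set \<Rightarrow> 'b::linorder set \<Rightarrow> ('a \<times> 'b) set \<Rightarrow> 'a + 'b \<Rightarrow> ('a \<times> 'b) set" where
  "Tr_edges U V E v = {(u, w). \<exists>ws \<in> dec_paths_from U V E v. \<exists>i. Suc i < length ws \<and>
      {ws ! i, ws ! Suc i} = {Inl u, Inr w}}"

definition induced_edges :: "('a \<times> 'b) set \<Rightarrow> ('a + 'b) set \<Rightarrow> ('a \<times> 'b) set" where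
  "induced_edges E S = {(u, w) \<in> E. Inl u \<in> S \<and> Inr w \<in> S}"

end

theory Submission
  imports Defs
begin

text \<open>Every vertex \<open>w \<noteq> v\<close> of \<open>T\<^sub>r(v)\<close> has a parent, its predecessor on a decreasing path
  from \<open>v\<close> to \<open>w\<close>. Path restriction implies that no neighbour of \<open>w\<close> inside \<open>T\<^sub>r(v)\<close> lies
  above a parent of \<open>w\<close>; hence the parent is unique, and every edge of \<open>G\<close> between two
  vertices of \<open>T\<^sub>r(v)\<close> joins a vertex to its parent. So \<open>w \<mapsto> {w, parent w}\<close> is a bijection
  from the non-root vertices onto the induced edges, and these edges all lie on the paths
  forming \<open>T\<^sub>r(v)\<close>.\<close>

definition part_less :: "'a::linorder + 'b::linorder \<Rightarrow> 'a + 'b \<Rightarrow> bool" where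
  "part_less x y \<longleftrightarrow> (isl x = isl y \<longrightarrow> vless x y)"

lemma vless_irrefl: "\<not> vless x x"
  by (cases x) auto

lemma vle_refl: "vle x x"
  by (cases x) auto

lemma vless_imp_vle: "vless x y \<Longrightarrow> vle x y"
  by (cases x; cases y) auto

lemma vless_trans: "vless x y \<Longrightarrow> vless y z \<Longrightarrow> vless x z"
  by (cases x; cases y; cases z) auto

lemma vless_vle_trans: "vless x y \<Longrightarrow> vle y z \<Longrightarrow> vless x z"
  by (cases x; cases y; cases z) auto

lemma not_vle_imp_vless: "isl x = isl y \<Longrightarrow> \<not> vle x y \<Longrightarrow> vless y x"
  by (cases x; cases y) auto

lemma vless_linear: "isl x = isl y \<Longrightarrow> x \<noteq> y \<Longrightarrow> vless x y \<or> vless y x"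
  by (cases x; cases y) auto

lemma adj_sym: "adj E x y = adj E y x"
  by (cases x; cases y) auto

lemma adj_isl: "adj E x y \<Longrightarrow> isl x \<noteq> isl y"
  by (cases x; cases y) auto

lemma set_lefts: "set (lefts ws) = {a. Inl a \<in> set ws}"
  by (induction ws) (auto simp: lefts_def split: sum.splits)

lemma set_rights: "set (rights ws) = {b. Inr b \<in> set ws}"
  by (induction ws) (auto simp: rights_def split: sum.splits)

lemma sorted_lefts_rights_iff:
  "sorted_wrt (<) (lefts ws) \<and> sorted_wrt (<) (rights ws) \<longleftrightarrow> sorted_wrt part_less ws"
proof (induction ws)
  case Nil
  show ?case by (simp add: lefts_def rights_def)
next
  case (Cons x ws)
  show ?case
  proof (cases x)
    case (Inl a)
    have "(\<forall>y\<in>set ws. part_less x y) \<longleftrightarrow> (\<forall>b\<in>set (lefts ws). a < b)"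
      unfolding set_lefts part_less_def Inl by (auto, case_tac y, auto)
    with Cons Inl show ?thesis
      by (auto simp: lefts_def rights_def)
  next
    case (Inr a)
    have "(\<forall>y\<in>set ws. part_less x y) \<longleftrightarrow> (\<forall>b\<in>set (rights ws). a < b)"
      unfolding set_rights part_less_def Inr by (auto, case_tac y, auto)
    with Cons Inr show ?thesis
      by (auto simp: lefts_def rights_def)
  qed
qed

lemma sorted_part_less_distinct: "sorted_wrt part_less ws \<Longrightarrow> distinct ws"
  by (induction ws) (auto simp: part_less_def vless_irrefl)

lemma inc_path_iff:
  "inc_path U V E ws \<longleftrightarrow>
     ws \<noteq> [] \<and> set ws \<subseteq> verts U V \<and> successively (adj E) ws \<and> sorted_wrt part_less ws"
  unfolding inc_path_def sorted_lefts_rights_iff successively_conv_nth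
  using sorted_part_less_distinct by blast

lemma inc_path_rev_iff:
  "inc_path U V E (rev ws) \<longleftrightarrow> ws \<noteq> [] \<and> set ws \<subseteq> verts U V \<and> successively (adj E) ws
     \<and> sorted_wrt (\<lambda>x y. part_less y x) ws"
proof -
  have flip: "(\<lambda>x y. adj E y x) = adj E"
    by (intro ext) (rule adj_sym)
  show ?thesis
    unfolding inc_path_iff sorted_wrt_rev successively_rev set_rev flip by simp
qed

lemma path_restricted_no_back_edge:
  assumes "path_restricted U V E" and "inc_path U V E (w # p # ws)"
    and "x \<in> verts U V" and "adj E w x" and "z \<in> set (w # p # ws)" and "vle x z"
  shows "\<not> vless p x"
  using assms unfolding path_restricted_def has_back_edge_def by auto

fun edge_pair :: "'a + 'b \<Rightarrow> 'a + 'b \<Rightarrow> 'a \<times> 'b" where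
  "edge_pair (Inl a) (Inr b) = (a, b)"
| "edge_pair (Inr b) (Inl a) = (a, b)"
| "edge_pair _ _ = undefined"

lemma edge_pair_in: "adj E x y \<Longrightarrow> edge_pair x y \<in> E"
  by (cases x; cases y) auto

lemma edge_pair_ends: "adj E x y \<Longrightarrow> edge_pair x y = (a, b) \<Longrightarrow> {x, y} = {Inl a, Inr b}"
  by (cases x; cases y) auto

lemma edge_pair_eq:
  "adj E x y \<Longrightarrow> adj E x' y' \<Longrightarrow> edge_pair x y = edge_pair x' y' \<Longrightarrow>
     x = x' \<and> y = y' \<or> x = y' \<and> y = x'"
  by (cases x; cases y; cases x'; cases y') auto

locale path_restricted_root =
  fixes U :: "'a::linorder set" and V :: "'b::linorder set" and E :: "('a \<times> 'b) set"
    and v :: "'a + 'b"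
  assumes path_restricted: "path_restricted U V E" and root: "v \<in> verts U V"
begin

abbreviation "T \<equiv> Tr_verts U V E v"
abbreviation "D \<equiv> dec_paths_from U V E v"

lemma dec_path_iff:
  "P \<in> D \<longleftrightarrow> P \<noteq> [] \<and> hd P = v \<and> set P \<subseteq> verts U V \<and> successively (adj E) P
     \<and> sorted_wrt (\<lambda>x y. part_less y x) P"
  unfolding dec_paths_from_def mem_Collect_eq inc_path_rev_iff by blast

lemma dec_path_subset_T: "P \<in> D \<Longrightarrow> set P \<subseteq> T"
  by (auto simp: Tr_verts_def)

lemma T_subset: "T \<subseteq> verts U V"
  by (auto simp: Tr_verts_def dec_path_iff)

lemma finite_T: "finite T"
proof -
  have "finite (verts U V)"
    using path_restricted by (simp add: path_restricted_def ordered_bipartite_def verts_def)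
  then show ?thesis
    using T_subset finite_subset by blast
qed

lemma root_in_T: "v \<in> T"
  using dec_path_subset_T[of "[v]"] root by (simp add: dec_path_iff)

lemma dec_path_prefix: "P @ Q \<in> D \<Longrightarrow> P \<noteq> [] \<Longrightarrow> P \<in> D"
  by (auto simp: dec_path_iff successively_append_iff sorted_wrt_append)

lemma dec_path_snoc:
  "P \<in> D \<Longrightarrow> adj E (last P) y \<Longrightarrow> y \<in> verts U V \<Longrightarrow> (\<forall>z\<in>set P. isl z = isl y \<longrightarrow> vless y z)
     \<Longrightarrow> P @ [y] \<in> D"
  by (auto simp: dec_path_iff successively_append_iff sorted_wrt_append part_less_def)

definition is_parent :: "'a + 'b \<Rightarrow> 'a + 'b \<Rightarrow> bool" where
  "is_parent w p \<longleftrightarrow> (\<exists>P. P @ [p, w] \<in> D)"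

lemma is_parent_props:
  assumes "is_parent w p"
  shows "p \<in> T" and "w \<in> T" and "adj E w p" and "w \<noteq> v"
proof -
  obtain P where P: "P @ [p, w] \<in> D"
    using assms is_parent_def by blast
  then show "p \<in> T" and "w \<in> T"
    using dec_path_subset_T by force+
  show "adj E w p"
    using P adj_sym by (fastforce simp: dec_path_iff successively_append_iff)
  have "v \<in> set (P @ [p])"
    using P by (cases P) (auto simp: dec_path_iff)
  then show "w \<noteq> v"
    using P by (auto simp: dec_path_iff sorted_wrt_append part_less_def vless_irrefl)
qed

text \<open>If \<open>y\<close> lies below a vertex of the path to \<open>w\<close>, then \<open>{w, y}\<close> is a back edge to that
  path read from \<open>w\<close>. Otherwise \<open>y\<close> lies above the whole path; then the second vertex \<open>q\<close>
  of a decreasing path from \<open>v\<close> to \<open>y\<close> lies above it as well, and \<open>{w, y}\<close> is a back edge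
  to the path extended by \<open>q\<close>.\<close>

lemma parent_not_below_neighbour:
  assumes "is_parent w p" and "y \<in> T" and "adj E w y"
  shows "\<not> vless p y"
proof
  assume py: "vless p y"
  obtain P where P: "P @ [p, w] \<in> D"
    using assms(1) is_parent_def by blast
  have y: "y \<in> verts U V"
    using assms(2) T_subset by blast
  have inc: "inc_path U V E (w # p # rev P)"
    using P by (simp add: dec_paths_from_def)
  show False
  proof (cases "\<exists>z\<in>set (P @ [p, w]). vle y z")
    case True
    then show False
      using path_restricted_no_back_edge[OF path_restricted inc y assms(3)] py by auto
  next
    case above: False
    obtain Q where Q: "Q \<in> D" "y \<in> set Q"
      using assms(2) by (auto simp: Tr_verts_def)
    then obtain Q' where Q': "Q = v # Q'"
      by (cases Q) (auto simp: dec_path_iff)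
    have "v \<in> set (P @ [p, w])"
      using P by (cases P) (auto simp: dec_path_iff)
    then have yv: "\<not> vle y v"
      using above by blast
    then have "y \<noteq> v"
      using vle_refl by blast
    then obtain q Q'' where Q'': "Q' = q # Q''" and y_in: "y \<in> set (q # Q'')"
      using Q(2) Q' by (cases Q') auto
    have sorted: "sorted_wrt (\<lambda>x y. part_less y x) (v # q # Q'')"
      and adj_vq: "adj E v q" and q: "q \<in> verts U V"
      using Q(1) unfolding Q' Q'' dec_path_iff by auto
    have "part_less y v"
      using sorted y_in by auto
    then have "isl y \<noteq> isl v"
      using yv vless_imp_vle by (auto simp: part_less_def)
    then have isl_yq: "isl y = isl q"
      using adj_isl[OF adj_vq] by auto
    have "vle y q"
    proof (cases "y = q")
      case False
      then have "part_less y q"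
        using sorted y_in by simp
      then show ?thesis
        using isl_yq vless_imp_vle by (simp add: part_less_def)
    qed (simp add: vle_refl)
    then have "\<forall>z\<in>set (P @ [p, w]). isl z = isl q \<longrightarrow> vless z q"
      using above isl_yq not_vle_imp_vless vless_vle_trans by metis
    then have "inc_path U V E (rev (q # P @ [p, w]))"
      using P q adj_vq adj_sym[of E q v] unfolding inc_path_rev_iff dec_path_iff
      by (cases P) (auto simp: part_less_def)
    then show False
      using path_restricted_no_back_edge[OF path_restricted _ y assms(3), where ws = "rev P @ [q]" and z = q]
        py \<open>vle y q\<close> by simp
  qed
qed

lemma is_parent_unique:
  assumes "is_parent w p" and "is_parent w p'"
  shows "p = p'"
proof -
  have "\<not> vless p p'" "\<not> vless p' p"
    using assms parent_not_below_neighbour is_parent_props by blast+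
  moreover have "isl p = isl p'"
    using assms is_parent_props(3) adj_isl by blast
  ultimately show ?thesis
    using vless_linear by blast
qed

definition parent :: "'a + 'b \<Rightarrow> 'a + 'b" where
  "parent w = (THE p. is_parent w p)"

lemma parent_eq: "is_parent w p \<Longrightarrow> parent w = p"
  unfolding parent_def using is_parent_unique by blast

lemma is_parent_parent:
  assumes "w \<in> T" and "w \<noteq> v"
  shows "is_parent w (parent w)"
proof -
  obtain Q where Q: "Q \<in> D" "w \<in> set Q"
    using assms(1) by (auto simp: Tr_verts_def)
  then obtain A B where AB: "Q = A @ w # B"
    by (meson split_list)
  have "A \<noteq> []"
    using Q(1) assms(2) AB by (auto simp: dec_path_iff)
  then obtain A' p where "A = A' @ [p]"
    by (cases A rule: rev_cases) auto
  then have "A' @ [p, w] \<in> D"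
    using dec_path_prefix[of "A' @ [p, w]" B] Q(1) AB by simp
  then show ?thesis
    using parent_eq is_parent_def by blast
qed

lemma parent_parent_neq:
  assumes "w \<in> T" and "w \<noteq> v" and "parent w \<noteq> v"
  shows "parent (parent w) \<noteq> w"
proof -
  obtain P where P: "P @ [parent w, w] \<in> D"
    using is_parent_parent[OF assms(1,2)] is_parent_def by blast
  then have "P \<noteq> []"
    using assms(3) by (auto simp: dec_path_iff)
  then obtain P' q where P': "P = P' @ [q]"
    by (cases P rule: rev_cases) auto
  then have "P' @ [q, parent w] \<in> D"
    using dec_path_prefix[of "P' @ [q, parent w]" "[w]"] P by simp
  then have "parent (parent w) = q"
    using parent_eq is_parent_def by blast
  moreover have "q \<noteq> w"
    using P unfolding P' by (auto simp: dec_path_iff sorted_wrt_append part_less_def vless_irrefl)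
  ultimately show ?thesis
    by simp
qed

lemma adjacent_in_T_parent:
  assumes "x \<in> T" and "y \<in> T" and "adj E x y"
  shows "x \<noteq> v \<and> parent x = y \<or> y \<noteq> v \<and> parent y = x"
proof (rule disjCI)
  assume not_child: "\<not> (y \<noteq> v \<and> parent y = x)"
  have "x \<noteq> v"
  proof
    assume "x = v"
    then have "[] @ [x, y] \<in> D"
      using assms T_subset adj_isl[OF assms(3)] by (auto simp: dec_path_iff part_less_def)
    then show False
      using not_child parent_eq is_parent_def is_parent_props(4) by blast
  qed
  moreover have "parent x = y"
  proof (rule ccontr)
    assume ne: "parent x \<noteq> y"
    obtain P where P: "P @ [parent x, x] \<in> D"
      using is_parent_parent[OF assms(1) \<open>x \<noteq> v\<close>] is_parent_def by blast
    have "isl (parent x) = isl y"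
      using adj_isl assms(3) is_parent_props(3)[OF is_parent_parent[OF assms(1) \<open>x \<noteq> v\<close>]]
      by blast
    then have "vless y (parent x)"
      using parent_not_below_neighbour[OF is_parent_parent[OF assms(1) \<open>x \<noteq> v\<close>] assms(2,3)]
        ne vless_linear by blast
    moreover have "\<forall>z\<in>set P. isl z = isl y \<longrightarrow> vless (parent x) z"
      using P \<open>isl (parent x) = isl y\<close> by (auto simp: dec_path_iff sorted_wrt_append part_less_def)
    ultimately have "\<forall>z\<in>set (P @ [parent x, x]). isl z = isl y \<longrightarrow> vless y z"
      using adj_isl[OF assms(3)] vless_trans by auto
    then have "(P @ [parent x]) @ [x, y] \<in> D"
      using dec_path_snoc[OF P] assms(2,3) T_subset by auto
    then show False
      using not_child parent_eq is_parent_def is_parent_props(4) by blast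
  qed
  ultimately show "x \<noteq> v \<and> parent x = y" ..
qed

abbreviation parent_edge :: "'a + 'b \<Rightarrow> 'a \<times> 'b" where
  "parent_edge w \<equiv> edge_pair w (parent w)"

lemma parent_edge_ends:
  assumes "w \<in> T" and "w \<noteq> v" and "parent_edge w = (a, b)"
  shows "{w, parent w} = {Inl a, Inr b}" and "(a, b) \<in> E"
  using edge_pair_ends edge_pair_in is_parent_props(3)[OF is_parent_parent[OF assms(1,2)]] assms(3)
  by metis+

lemma induced_edges_eq_parent_edges: "induced_edges E T = parent_edge ` (T - {v})"
proof
  show "parent_edge ` (T - {v}) \<subseteq> induced_edges E T"
  proof (rule image_subsetI)
    fix w assume w: "w \<in> T - {v}"
    obtain a b where ab: "parent_edge w = (a, b)"
      by fastforce
    have "{w, parent w} \<subseteq> T"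
      using w is_parent_props(1)[OF is_parent_parent] by auto
    then show "parent_edge w \<in> induced_edges E T"
      using parent_edge_ends[OF _ _ ab] w ab by (auto simp: induced_edges_def)
  qed
  show "induced_edges E T \<subseteq> parent_edge ` (T - {v})"
  proof clarify
    fix a b assume "(a, b) \<in> induced_edges E T"
    then have ab: "Inl a \<in> T" "Inr b \<in> T" "adj E (Inl a) (Inr b)"
      by (auto simp: induced_edges_def)
    then show "(a, b) \<in> parent_edge ` (T - {v})"
      using adjacent_in_T_parent[OF ab] by force
  qed
qed

lemma inj_on_parent_edge: "inj_on parent_edge (T - {v})"
proof
  fix w1 w2 assume w1: "w1 \<in> T - {v}" and w2: "w2 \<in> T - {v}"
    and eq: "parent_edge w1 = parent_edge w2"
  have "w1 = w2 \<or> w1 = parent w2 \<and> parent w1 = w2"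
    using edge_pair_eq[OF _ _ eq] is_parent_props(3) is_parent_parent w1 w2 by blast
  then show "w1 = w2"
    using parent_parent_neq w1 w2 by blast
qed

lemma Tr_edges_eq_induced_edges: "Tr_edges U V E v = induced_edges E T"
proof
  show "Tr_edges U V E v \<subseteq> induced_edges E T"
  proof
    fix e assume "e \<in> Tr_edges U V E v"
    then obtain a b P i where e: "e = (a, b)" and P: "P \<in> D" and i: "Suc i < length P"
      and ends: "{P ! i, P ! Suc i} = {Inl a, Inr b}"
      unfolding Tr_edges_def by blast
    have "adj E (P ! i) (P ! Suc i)"
      using P i successively_nth by (auto simp: dec_path_iff)
    moreover have "{P ! i, P ! Suc i} \<subseteq> T"
      using P i dec_path_subset_T nth_mem by (metis Suc_lessD empty_subsetI insert_subset subsetD)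
    ultimately show "e \<in> induced_edges E T"
      using e ends by (auto simp: induced_edges_def doubleton_eq_iff adj_sym)
  qed
  have "parent_edge ` (T - {v}) \<subseteq> Tr_edges U V E v"
  proof (rule image_subsetI)
    fix w assume w: "w \<in> T - {v}"
    obtain P where P: "P @ [parent w, w] \<in> D"
      using is_parent_parent w is_parent_def by blast
    obtain a b where ab: "parent_edge w = (a, b)"
      by fastforce
    have "{(P @ [parent w, w]) ! length P, (P @ [parent w, w]) ! Suc (length P)} = {Inl a, Inr b}"
      using parent_edge_ends(1) w ab by (auto simp: nth_append)
    then show "parent_edge w \<in> Tr_edges U V E v"
      unfolding Tr_edges_def ab using P
      by (intro CollectI case_prodI bexI[of _ "P @ [parent w, w]"] exI[of _ "length P"]) auto
  qed
  then show "induced_edges E T \<subseteq> Tr_edges U V E v"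
    by (simp add: induced_edges_eq_parent_edges)
qed

end

theorem lemma3p3:
  fixes U :: "'a::linorder set" and V :: "'b::linorder set" and E :: "('a \<times> 'b) set"
    and v :: "'a + 'b"
  assumes "path_restricted U V E"
    and "v \<in> verts U V"
  shows "card (induced_edges E (Tr_verts U V E v)) = card (Tr_verts U V E v) - 1
         \<and> induced_edges E (Tr_verts U V E v) = Tr_edges U V E v"
proof -
  interpret path_restricted_root U V E v
    using assms by unfold_locales
  have "card (induced_edges E T) = card (T - {v})"
    unfolding induced_edges_eq_parent_edges by (rule card_image[OF inj_on_parent_edge])
  also have "\<dots> = card T - 1"
    using finite_T root_in_T by simp
  finally show ?thesis
    using Tr_edges_eq_induced_edges by simp
qed

end
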